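(* Let $X$ be a compact metrizable space and let $\mathcal F=\{f_1,\dots,f_m\}$ and $\mathcal G=\{g_1,\dots,g_m\}$ be Markov maps on $X$ with respect to partitions $\mathcal A=\{A_1,\dots,A_m\}$ and $\mathcal B=\{B_1,\dots,B_m\}$ respectively. Suppose both are topologically expanding and that they are combinatorially conjugate. Then they are topologically conjugate: there is a homeomorphism $H:X\to X$ with $H\circ f_i(x)=g_i\circ H(x)$ for all $x\in A_i$ and all $i\in\{1,\dots,m\}$.
   Context: A partition of $X$ is a finite family $\mathcal A=\{A_1,\dots,A_m\}$ of closed connected subsets with $A_i\cap A_j$ finite for $i\ne j$ and $\bigcup A_i=X$; its break-points are $\mathrm{bk}(\mathcal A)=\{x: x\in A_i\cap A_j \text{ for some } i\ne j\}$. A Markov map with respect to $\mathcal A$ is a family $\mathcal F=\{f_i\}$ of homeomorphisms $f_i:A_i\to f_i(A_i)\subseteq X$ (not required to agree on overlaps) such that each $f_i(A_i)$ is a union of members of $\mathcal A$ and $f_i(A_i\cap\mathrm{bk}(\mathcal A))\subseteq\mathrm{bk}(\mathcal A)$. Level-$n$ pieces are defined inductively: $\mathcal A^0=\mathcal A$, and $\mathcal A^{n}$ consists of the sets $(f_i|_{A_i})^{-1}(B)$ with $B\in\mathcal A^{n-1}$, $B\subseteq f_i(A_i)$. $\mathcal F$ is topologically expanding if for every $x\in X$ the sets $\mathrm{Int}\big(\bigcup\{A\in\mathcal A^n: x\in A\}\big)$, $n\in\mathbb N$, form a neighborhood basis of $x$. $\mathcal F$ and $\mathcal G$ are combinatorially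 conjugate if there is a homeomorphism $H:X\to X$ with $H(A_i)=B_i$ for all $i$, $H\circ f_i(x)=g_i\circ H(x)$ for every break-point $x\in A_i\cap\mathrm{bk}(\mathcal A)$, and the same Markov matrix: $A_j\subseteq f_i(A_i)$ iff $B_j\subseteq g_i(B_i)$. *)

theory Defs
  imports "HOL-Analysis.Analysis"
begin

definition is_partition :: "'a topology \<Rightarrow> nat \<Rightarrow> (nat \<Rightarrow> 'a set) \<Rightarrow> bool" where
  "is_partition X m A \<longleftrightarrow>
     (\<forall>i<m. closedin X (A i) \<and> connectedin X (A i)) \<and>
     (\<forall>i<m. \<forall>j<m. i \<noteq> j \<longrightarrow> finite (A i \<inter> A j)) \<and>
     (\<Union>i<m. A i) = topspace X"

definition bk :: "nat \<Rightarrow> (nat \<Rightarrow> 'a set) \<Rightarrow> 'a set" where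
  "bk m A = {x. \<exists>i<m. \<exists>j<m. i \<noteq> j \<and> x \<in> A i \<and> x \<in> A j}"

definition markov_map :: "'a topology \<Rightarrow> nat \<Rightarrow> (nat \<Rightarrow> 'a set) \<Rightarrow> (nat \<Rightarrow> 'a \<Rightarrow> 'a) \<Rightarrow> bool" where
  "markov_map X m A f \<longleftrightarrow>
     is_partition X m A \<and>
     (\<forall>i<m. f i ` A i \<subseteq> topspace X \<and>
            homeomorphic_map (subtopology X (A i)) (subtopology X (f i ` A i)) (f i) \<and>
            (\<exists>J \<subseteq> {..<m}. f i ` A i = (\<Union>j\<in>J. A j)) \<and>
            f i ` (A i \<inter> bk m A) \<subseteq> bk m A)"

fun pieces :: "nat \<Rightarrow> (nat \<Rightarrow> 'a set) \<Rightarrow> (nat \<Rightarrow> 'a \<Rightarrow> 'a) \<Rightarrow> nat \<Rightarrow> 'a set set" where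
  "pieces m A f 0 = A ` {..<m}"
| "pieces m A f (Suc n) =
     {{x \<in> A i. f i x \<in> B} | i B. i < m \<and> B \<in> pieces m A f n \<and> B \<subseteq> f i ` A i}"

definition top_expanding :: "'a topology \<Rightarrow> nat \<Rightarrow> (nat \<Rightarrow> 'a set) \<Rightarrow> (nat \<Rightarrow> 'a \<Rightarrow> 'a) \<Rightarrow> bool" where
  "top_expanding X m A f \<longleftrightarrow>
     (\<forall>x \<in> topspace X.
        (\<forall>n. x \<in> X interior_of (\<Union>{P \<in> pieces m A f n. x \<in> P})) \<and>
        (\<forall>U. openin X U \<and> x \<in> U \<longrightarrow>
             (\<exists>n. X interior_of (\<Union>{P \<in> pieces m A f n. x \<in> P}) \<subseteq> U)))"

definition comb_conjugate ::
  "'a topology \<Rightarrow> nat \<Rightarrow> (nat \<Rightarrow> 'a set) \<Rightarrow> (nat \<Rightarrow> 'a \<Rightarrow> 'a)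
     \<Rightarrow> (nat \<Rightarrow> 'a set) \<Rightarrow> (nat \<Rightarrow> 'a \<Rightarrow> 'a) \<Rightarrow> bool" where
  "comb_conjugate X m A f B g \<longleftrightarrow>
     (\<exists>H. homeomorphic_map X X H \<and>
          (\<forall>i<m. H ` A i = B i) \<and>
          (\<forall>i<m. \<forall>x \<in> A i \<inter> bk m A. H (f i x) = g i (H x)) \<and>
          (\<forall>i<m. \<forall>j<m. A j \<subseteq> f i ` A i \<longleftrightarrow> B j \<subseteq> g i ` B i))"

end

theory Submission
  imports Defs
begin

(* Starting from the combinatorial conjugacy H0, define H (n+1) on A i as g i^-1 o H n o f i.
   Distinct A i overlap only in break points, where every branch returns H0, so each H n is a
   continuous injection mapping every A j onto B j.  Inductively H n maps each level-k piece of
   the first system onto a level-k piece of the second, the same one for all n >= k.  Expansion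
   makes the pieces through a point shrink; since pieces are connected and meet in finitely many
   points, compactness turns this into uniform smallness of the level-k pieces.  Hence (H n) is
   uniformly Cauchy, and its limit H satisfies H o f i = g i o H.  The same construction started
   from the inverse of H0 produces maps inverse to every H n, whose limit is inverse to H. *)

lemma homeomorphic_maps_inv_into:
  assumes "homeomorphic_map X Y f"
  shows "homeomorphic_maps X Y f (inv_into (topspace X) f)"
proof -
  obtain g where g: "homeomorphic_maps X Y f g"
    using assms homeomorphic_map_maps by blast
  have "g y = inv_into (topspace X) f y" if "y \<in> topspace Y" for y
  proof -
    have "g y \<in> topspace X" "f (g y) = y"
      using g that unfolding homeomorphic_maps_def continuous_map_def by auto
    then show ?thesis
      using inv_into_f_f[OF homeomorphic_imp_injective_map[OF assms]] by metis
  qed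
  then show ?thesis
    using g homeomorphic_maps_eq by blast
qed

lemma connectedin_finite_imp_eq:
  assumes "t1_space X" "connectedin X S" "finite S" "a \<in> S" "b \<in> S"
  shows "a = b"
proof -
  have "X derived_set_of S = {}"
    using assms(1,3) t1_space_derived_set_of_finite by blast
  then obtain c where "S = {c}"
    using connectedin_imp_perfect_gen[OF assms(1,2)] assms(4) by blast
  then show ?thesis
    using assms(4,5) by blast
qed

lemma (in Metric_space) connectedin_subset_mcball:
  assumes S: "connectedin mtopology S" and "y \<in> S" "0 \<le> \<epsilon>"
    and "S \<subseteq> mball y \<epsilon> \<union> F" "finite F"
  shows "S \<subseteq> mcball y \<epsilon>"
proof -
  have "S \<subseteq> M"
    using S connectedin_subset_topspace by fastforce
  have "finite (F \<inter> S - mcball y \<epsilon>)" "F \<inter> S - mcball y \<epsilon> \<subseteq> topspace mtopology"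
    using \<open>S \<subseteq> M\<close> \<open>finite F\<close> by auto
  then have "closedin mtopology (F \<inter> S - mcball y \<epsilon>)"
    using Hausdorff_imp_t1_space[OF Hausdorff_space_mtopology]
    unfolding t1_space_closedin_finite by blast
  moreover have "mcball y \<epsilon> \<inter> S \<noteq> {}"
    using \<open>y \<in> S\<close> \<open>S \<subseteq> M\<close> \<open>0 \<le> \<epsilon>\<close> by auto
  moreover have "S \<subseteq> mcball y \<epsilon> \<union> (F \<inter> S - mcball y \<epsilon>)"
    using assms(4) mball_subset_mcball by blast
  ultimately have "(F \<inter> S - mcball y \<epsilon>) \<inter> S = {}"
    using S unfolding connectedin_closedin by blast
  then show ?thesis
    using assms(4) mball_subset_mcball by blast
qed

section \<open>Markov maps and their pieces\<close>

lemma is_partitionD: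
  assumes "is_partition X m A"
  shows "\<And>i. i < m \<Longrightarrow> closedin X (A i)" "\<And>i. i < m \<Longrightarrow> connectedin X (A i)"
    and "\<And>i j. i < m \<Longrightarrow> j < m \<Longrightarrow> i \<noteq> j \<Longrightarrow> finite (A i \<inter> A j)"
    and "(\<Union>i<m. A i) = topspace X"
  using assms unfolding is_partition_def by blast+

lemma image_Int_bk:
  assumes inj: "inj_on h (\<Union>i<m. A i)" and AB: "\<And>i. i < m \<Longrightarrow> h ` A i = B i" and "k < m"
  shows "h ` (A k \<inter> bk m A) = B k \<inter> bk m B"
proof
  show "h ` (A k \<inter> bk m A) \<subseteq> B k \<inter> bk m B"
  proof
    fix z assume "z \<in> h ` (A k \<inter> bk m A)"
    then obtain x i j where "x \<in> A k" "i < m" "j < m" "i \<noteq> j" "x \<in> A i" "x \<in> A j" "z = h x"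
      unfolding bk_def by blast
    then have "z \<in> B i" "z \<in> B j" "z \<in> B k"
      using AB \<open>k < m\<close> by blast+
    then show "z \<in> B k \<inter> bk m B"
      using \<open>i < m\<close> \<open>j < m\<close> \<open>i \<noteq> j\<close> unfolding bk_def by blast
  qed
  show "B k \<inter> bk m B \<subseteq> h ` (A k \<inter> bk m A)"
  proof
    fix z assume z: "z \<in> B k \<inter> bk m B"
    then obtain i j where ij: "i < m" "j < m" "i \<noteq> j" "z \<in> B i" "z \<in> B j"
      unfolding bk_def by auto
    have "z \<in> h ` A k"
      using AB[OF \<open>k < m\<close>] z by simp
    then obtain w where w: "w \<in> A k" "h w = z"
      by blast
    have "w \<in> A l" if "l < m" "z \<in> B l" for l
    proof -
      have "z \<in> h ` A l"
        using AB[OF that(1)] that(2) by simp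
      then obtain x where x: "x \<in> A l" "h x = z"
        by blast
      have "x \<in> (\<Union>i<m. A i)" "w \<in> (\<Union>i<m. A i)"
        using x w that(1) \<open>k < m\<close> by auto
      then have "x = w"
        using inj_onD[OF inj] x w by metis
      then show ?thesis
        using x by simp
    qed
    then show "z \<in> h ` (A k \<inter> bk m A)"
      using ij w unfolding bk_def by blast
  qed
qed

lemma markov_mapD:
  assumes "markov_map X m A f"
  shows "is_partition X m A"
    and "\<And>i. i < m \<Longrightarrow> f i ` A i \<subseteq> topspace X"
    and "\<And>i. i < m \<Longrightarrow> homeomorphic_map (subtopology X (A i)) (subtopology X (f i ` A i)) (f i)"
    and "\<And>i. i < m \<Longrightarrow> \<exists>J \<subseteq> {..<m}. f i ` A i = (\<Union>j\<in>J. A j)"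
    and "\<And>i. i < m \<Longrightarrow> f i ` (A i \<inter> bk m A) \<subseteq> bk m A"
  using assms unfolding markov_map_def by simp_all

locale markov_system =
  fixes X :: "'a topology" and m :: nat and A :: "nat \<Rightarrow> 'a set" and f :: "nat \<Rightarrow> 'a \<Rightarrow> 'a"
  assumes markov: "markov_map X m A f"
begin

lemmas closedin_A = is_partitionD(1)[OF markov_mapD(1)[OF markov]]
   and connectedin_A = is_partitionD(2)[OF markov_mapD(1)[OF markov]]
   and finite_A_Int_A = is_partitionD(3)[OF markov_mapD(1)[OF markov]]
   and Union_A = is_partitionD(4)[OF markov_mapD(1)[OF markov]]
   and image_f_subset_topspace = markov_mapD(2)[OF markov]
   and homeomorphic_map_f = markov_mapD(3)[OF markov]

lemma f_bk: "i < m \<Longrightarrow> x \<in> A i \<Longrightarrow> x \<in> bk m A \<Longrightarrow> f i x \<in> bk m A"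
  using markov_mapD(5)[OF markov] by blast

lemma A_subset_topspace: "i < m \<Longrightarrow> A i \<subseteq> topspace X"
  using closedin_A closedin_subset by blast

lemma obtain_A:
  assumes "x \<in> topspace X"
  obtains i where "i < m" "x \<in> A i"
  using assms Union_A by blast

lemma obtain_covered_A:
  assumes "i < m" "y \<in> f i ` A i"
  obtains j where "j < m" "A j \<subseteq> f i ` A i" "y \<in> A j"
proof -
  obtain J where J: "J \<subseteq> {..<m}" "f i ` A i = (\<Union>j\<in>J. A j)"
    using markov_mapD(4)[OF markov assms(1)] by blast
  then obtain j where "j \<in> J" "y \<in> A j"
    using assms(2) by auto
  then show ?thesis
    using that J by blast
qed

definition finv :: "nat \<Rightarrow> 'a \<Rightarrow> 'a" where
  "finv i = inv_into (A i) (f i)"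

lemma homeomorphic_maps_f_finv:
  assumes "i < m"
  shows "homeomorphic_maps (subtopology X (A i)) (subtopology X (f i ` A i)) (f i) (finv i)"
  using homeomorphic_maps_inv_into[OF homeomorphic_map_f[OF assms]] A_subset_topspace[OF assms]
  by (simp add: finv_def Int_absorb1)

lemma inj_on_f: "i < m \<Longrightarrow> inj_on (f i) (A i)"
  using homeomorphic_imp_injective_map[OF homeomorphic_map_f] A_subset_topspace
  by (metis Int_absorb1 topspace_subtopology)

lemma finv_f [simp]: "i < m \<Longrightarrow> x \<in> A i \<Longrightarrow> finv i (f i x) = x"
  by (simp add: finv_def inj_on_f)

lemma f_finv: "y \<in> f i ` A i \<Longrightarrow> f i (finv i y) = y"
  by (simp add: finv_def f_inv_into_f)

lemma finv_in_A: "y \<in> f i ` A i \<Longrightarrow> finv i y \<in> A i"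
  by (simp add: finv_def inv_into_into)

lemma continuous_map_f: "i < m \<Longrightarrow> continuous_map (subtopology X (A i)) X (f i)"
  using homeomorphic_imp_continuous_map[OF homeomorphic_map_f] continuous_map_into_fulltopology
  by blast

lemma continuous_map_finv: "i < m \<Longrightarrow> continuous_map (subtopology X (f i ` A i)) X (finv i)"
  using homeomorphic_maps_f_finv continuous_map_into_fulltopology
  unfolding homeomorphic_maps_def by blast

lemma pieces_subset_A: "P \<in> pieces m A f n \<Longrightarrow> \<exists>i<m. P \<subseteq> A i"
  by (cases n) auto

lemma pieces_subset_topspace: "P \<in> pieces m A f n \<Longrightarrow> P \<subseteq> topspace X"
  using pieces_subset_A A_subset_topspace by blast

lemma finite_pieces: "finite (pieces m A f n)"
proof (induction n)
  case (Suc n)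
  have "pieces m A f (Suc n) \<subseteq> (\<lambda>(i, B). {x \<in> A i. f i x \<in> B}) ` ({..<m} \<times> pieces m A f n)"
    by auto
  then show ?case
    using Suc finite_subset by blast
qed simp

lemma closedin_pieces: "P \<in> pieces m A f n \<Longrightarrow> closedin X P"
proof (induction n arbitrary: P)
  case (Suc n)
  then obtain i B where P: "P = {x \<in> A i. f i x \<in> B}" "i < m" "B \<in> pieces m A f n"
    by auto
  have "closedin (subtopology X (A i)) {x \<in> topspace (subtopology X (A i)). f i x \<in> B}"
    using closedin_continuous_map_preimage[OF continuous_map_f[OF P(2)] Suc.IH[OF P(3)]] .
  then show ?case
    using closedin_trans_full[OF _ closedin_A[OF P(2)]] A_subset_topspace[OF P(2)] P(1)
    by (simp add: Int_absorb1)
qed (use closedin_A in auto)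

lemma preimage_piece_eq_image_finv:
  assumes "i < m" "B \<subseteq> f i ` A i"
  shows "{x \<in> A i. f i x \<in> B} = finv i ` B"
proof
  show "{x \<in> A i. f i x \<in> B} \<subseteq> finv i ` B"
    using finv_f[OF assms(1)] by (metis (mono_tags, lifting) image_eqI mem_Collect_eq subsetI)
  show "finv i ` B \<subseteq> {x \<in> A i. f i x \<in> B}"
  proof
    fix x assume "x \<in> finv i ` B"
    then obtain y where "y \<in> B" "x = finv i y"
      by blast
    then show "x \<in> {x \<in> A i. f i x \<in> B}"
      using assms(2) f_finv finv_in_A by auto
  qed
qed

lemma image_f_preimage:
  assumes "B \<subseteq> f i ` A i"
  shows "f i ` {x \<in> A i. f i x \<in> B} = B"
proof
  show "B \<subseteq> f i ` {x \<in> A i. f i x \<in> B}"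
  proof
    fix y assume "y \<in> B"
    with assms obtain x where "x \<in> A i" "y = f i x"
      by blast
    with \<open>y \<in> B\<close> show "y \<in> f i ` {x \<in> A i. f i x \<in> B}"
      by blast
  qed
qed blast

lemma connectedin_pieces: "P \<in> pieces m A f n \<Longrightarrow> connectedin X P"
proof (induction n arbitrary: P)
  case (Suc n)
  then obtain i B where P: "P = {x \<in> A i. f i x \<in> B}" "i < m" "B \<in> pieces m A f n" "B \<subseteq> f i ` A i"
    by auto
  have "connectedin (subtopology X (f i ` A i)) B"
    using Suc.IH[OF P(3)] P(4) connectedin_subtopology by blast
  then have "connectedin X (finv i ` B)"
    using connectedin_continuous_map_image continuous_map_finv[OF P(2)] by blast
  then show ?case
    using preimage_piece_eq_image_finv[OF P(2,4)] P(1) by simp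
qed (use connectedin_A in auto)

lemma finite_pieces_Int:
  "P \<in> pieces m A f n \<Longrightarrow> Q \<in> pieces m A f n \<Longrightarrow> P \<noteq> Q \<Longrightarrow> finite (P \<inter> Q)"
proof (induction n arbitrary: P Q)
  case 0
  then obtain i j where "i < m" "j < m" "P = A i" "Q = A j"
    by auto
  then show ?case
    using finite_A_Int_A 0(3) by blast
next
  case (Suc n)
  obtain i B where P: "P = {x \<in> A i. f i x \<in> B}" "i < m" "B \<in> pieces m A f n"
    using Suc.prems(1) by auto
  obtain j C where Q: "Q = {x \<in> A j. f j x \<in> C}" "j < m" "C \<in> pieces m A f n"
    using Suc.prems(2) by auto
  show ?case
  proof (cases "i = j")
    case False
    have "P \<inter> Q \<subseteq> A i \<inter> A j"
      unfolding P(1) Q(1) by blast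
    then show ?thesis
      using finite_A_Int_A[OF P(2) Q(2) False] finite_subset by blast
  next
    case True
    then have "B \<noteq> C"
      using Suc.prems(3) unfolding P(1) Q(1) by blast
    then have "finite (B \<inter> C)"
      using Suc.IH[OF P(3) Q(3)] by blast
    moreover have "f i ` (P \<inter> Q) \<subseteq> B \<inter> C"
      unfolding P(1) Q(1) True by blast
    ultimately have "finite (f i ` (P \<inter> Q))"
      using finite_subset by blast
    moreover have "inj_on (f i) (P \<inter> Q)"
      by (rule inj_on_subset[OF inj_on_f[OF P(2)]]) (unfold P(1), blast)
    ultimately show ?thesis
      using finite_imageD by blast
  qed
qed

lemma obtain_piece:
  assumes "j < m" "x \<in> A j"
  obtains P where "P \<in> pieces m A f n" "x \<in> P" "P \<subseteq> A j"
  using assms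
proof (induction n arbitrary: j x thesis)
  case (Suc n)
  obtain l where l: "l < m" "A l \<subseteq> f j ` A j" "f j x \<in> A l"
    using obtain_covered_A[OF Suc.prems(2) imageI[OF Suc.prems(3)]] by blast
  obtain Q where "Q \<in> pieces m A f n" "f j x \<in> Q" "Q \<subseteq> A l"
    using Suc.IH[OF _ l(1,3)] by blast
  moreover have "{y \<in> A j. f j y \<in> Q} \<in> pieces m A f (Suc n)"
  proof -
    have "Q \<subseteq> f j ` A j"
      using calculation(3) l(2) by blast
    then show ?thesis
      unfolding pieces.simps using calculation(1) Suc.prems(2) by blast
  qed
  ultimately show ?case
    using Suc.prems(1,3) by blast
qed auto

lemma obtain_piece_topspace:
  assumes "x \<in> topspace X"
  obtains P where "P \<in> pieces m A f n" "x \<in> P"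
  using assms obtain_A obtain_piece by metis

lemma A_subset_image_f_if_infinite:
  assumes "i < m" "l < m" "infinite (A l \<inter> f i ` A i)"
  shows "A l \<subseteq> f i ` A i"
proof (rule ccontr)
  assume not_covered: "\<not> A l \<subseteq> f i ` A i"
  have "A l \<inter> f i ` A i \<subseteq> (\<Union>j\<in>{..<m} - {l}. A l \<inter> A j)"
  proof
    fix y assume y: "y \<in> A l \<inter> f i ` A i"
    then obtain j where "j < m" "A j \<subseteq> f i ` A i" "y \<in> A j"
      using obtain_covered_A[OF assms(1)] by blast
    moreover have "j \<noteq> l"
      using not_covered calculation(2) by blast
    ultimately show "y \<in> (\<Union>j\<in>{..<m} - {l}. A l \<inter> A j)"
      using y by blast
  qed
  moreover have "finite (\<Union>j\<in>{..<m} - {l}. A l \<inter> A j)"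
    using assms(2) finite_A_Int_A by (intro finite_UN_I) auto
  ultimately show False
    using assms(3) finite_subset by blast
qed

lemma infinite_piece_refines:
  "P \<in> pieces m A f N \<Longrightarrow> k \<le> N \<Longrightarrow> infinite P \<Longrightarrow> \<exists>Q \<in> pieces m A f k. P \<subseteq> Q"
proof (induction N arbitrary: k P)
  case (Suc N)
  obtain i B where P: "P = {x \<in> A i. f i x \<in> B}" "i < m" "B \<in> pieces m A f N" "B \<subseteq> f i ` A i"
    using Suc.prems(1) by auto
  show ?case
  proof (cases k)
    case (Suc k')
    have "inj_on (f i) P"
      by (rule inj_on_subset[OF inj_on_f[OF P(2)]]) (unfold P(1), blast)
    moreover have "f i ` P = B"
      using image_f_preimage[OF P(4)] P(1) by simp
    ultimately have "infinite B"
      using Suc.prems(3) finite_imageD by metis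
    then obtain Q where Q: "Q \<in> pieces m A f k'" "B \<subseteq> Q"
      using Suc.IH[OF P(3)] Suc.prems(2) \<open>k = Suc k'\<close> by auto
    obtain l where l: "l < m" "Q \<subseteq> A l"
      using pieces_subset_A[OF Q(1)] by blast
    have "infinite (A l \<inter> f i ` A i)"
      using \<open>infinite B\<close> Q(2) l(2) P(4) finite_subset[of B "A l \<inter> f i ` A i"] by blast
    then have "Q \<subseteq> f i ` A i"
      using A_subset_image_f_if_infinite[OF P(2) l(1)] l(2) by blast
    then have "{x \<in> A i. f i x \<in> Q} \<in> pieces m A f k"
      using Q(1) P(2) \<open>k = Suc k'\<close> by auto
    moreover have "P \<subseteq> {x \<in> A i. f i x \<in> Q}"
      using P Q by auto
    ultimately show ?thesis
      by blast
  qed (use P(1,2) in auto)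
qed auto

definition nbhd :: "nat \<Rightarrow> 'a \<Rightarrow> 'a set" where
  "nbhd n y = topspace X - \<Union>{Q \<in> pieces m A f n. y \<notin> Q}"

lemma openin_nbhd: "openin X (nbhd n y)"
proof -
  have "closedin X (\<Union>{Q \<in> pieces m A f n. y \<notin> Q})"
    using finite_pieces closedin_pieces by (intro closedin_Union) auto
  then show ?thesis
    unfolding nbhd_def by (simp add: openin_diff)
qed

lemma mem_nbhd: "y \<in> topspace X \<Longrightarrow> y \<in> nbhd n y"
  unfolding nbhd_def by blast

lemma piece_meeting_nbhd:
  "z \<in> nbhd n y \<Longrightarrow> Q \<in> pieces m A f n \<Longrightarrow> z \<in> Q \<Longrightarrow> y \<in> Q"
  unfolding nbhd_def by blast

lemma nbhd_subset_star: "nbhd n y \<subseteq> \<Union>{P \<in> pieces m A f n. y \<in> P}"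
proof
  fix z assume z: "z \<in> nbhd n y"
  then obtain Q where "Q \<in> pieces m A f n" "z \<in> Q"
    using obtain_piece_topspace unfolding nbhd_def by blast
  then show "z \<in> \<Union>{P \<in> pieces m A f n. y \<in> P}"
    using piece_meeting_nbhd[OF z] by blast
qed

lemma finite_piece_Diff_nbhd:
  assumes P: "P \<in> pieces m A f n" "y \<in> P"
  shows "finite (P - nbhd n y)"
proof -
  have "P - nbhd n y = (\<Union>Q\<in>{Q \<in> pieces m A f n. y \<notin> Q}. P \<inter> Q)"
    using pieces_subset_topspace[OF P(1)] unfolding nbhd_def by blast
  moreover have "finite (P \<inter> Q)" if "Q \<in> pieces m A f n" "y \<notin> Q" for Q
    using finite_pieces_Int[OF P(1) that(1)] P(2) that(2) by blast
  then have "finite (\<Union>Q\<in>{Q \<in> pieces m A f n. y \<notin> Q}. P \<inter> Q)"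
    using finite_pieces by (intro finite_UN_I) auto
  ultimately show ?thesis
    by (simp only:)
qed

end

section \<open>Expanding Markov maps on compact metric spaces\<close>

locale expanding_markov_system = markov_system X m A f + Metric_space M d
  for X :: "'a topology" and m A f and M :: "'a set" and d +
  assumes X_eq: "X = mtopology" and compact: "compact_space X" and expanding: "top_expanding X m A f"
begin

lemma Hausdorff_X: "Hausdorff_space X"
  using Hausdorff_space_mtopology X_eq by simp

(* A piece through y lies in the ball up to finitely many points; connectedness removes them. *)
lemma pieces_at_shrink:
  assumes "y \<in> M" "0 < \<epsilon>"
  obtains n where "\<And>P. P \<in> pieces m A f n \<Longrightarrow> y \<in> P \<Longrightarrow> P \<subseteq> mcball y \<epsilon>"
proof -
  obtain n where n: "X interior_of (\<Union>{P \<in> pieces m A f n. y \<in> P}) \<subseteq> mball y \<epsilon>"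
    using expanding assms X_eq unfolding top_expanding_def by (metis centre_in_mball_iff openin_mball topspace_mtopology)
  have "nbhd n y \<subseteq> mball y \<epsilon>"
    using interior_of_maximal[OF nbhd_subset_star openin_nbhd] n by blast
  then have "P \<subseteq> mcball y \<epsilon>" if "P \<in> pieces m A f n" "y \<in> P" for P
    using connectedin_subset_mcball[of P y \<epsilon> "P - nbhd n y"] connectedin_pieces[OF that(1)]
      finite_piece_Diff_nbhd[OF that] that(2) assms(2) X_eq by auto
  then show ?thesis
    using that by blast
qed

(* An infinite piece refines a piece of every lower level, so a finite subcover by the
   neighbourhoods nbhd (n y) y yields a uniform level. *)
lemma infinite_pieces_in_small_balls:
  assumes "0 < \<epsilon>"
  obtains N where "\<And>Q. Q \<in> pieces m A f N \<Longrightarrow> infinite Q \<Longrightarrow> \<exists>y\<in>M. Q \<subseteq> mcball y \<epsilon>"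
proof -
  have "\<exists>n. \<forall>P\<in>pieces m A f n. y \<in> P \<longrightarrow> P \<subseteq> mcball y \<epsilon>" if "y \<in> M" for y
    using pieces_at_shrink[OF that assms] by metis
  then obtain n where n: "\<And>y P. y \<in> M \<Longrightarrow> P \<in> pieces m A f (n y) \<Longrightarrow> y \<in> P \<Longrightarrow> P \<subseteq> mcball y \<epsilon>"
    by metis
  have "compactin X M"
    using compact X_eq by (simp add: compact_space_def)
  then obtain \<F> where \<F>: "finite \<F>" "\<F> \<subseteq> (\<lambda>y. nbhd (n y) y) ` M" "M \<subseteq> \<Union>\<F>"
    using compactinD[of X M "(\<lambda>y. nbhd (n y) y) ` M"] openin_nbhd mem_nbhd X_eq by force
  then obtain Y where Y: "Y \<subseteq> M" "finite Y" "\<F> = (\<lambda>y. nbhd (n y) y) ` Y"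
    by (meson finite_subset_image)
  define N where "N = (\<Sum>y\<in>Y. n y)"
  have "\<exists>y\<in>M. Q \<subseteq> mcball y \<epsilon>" if Q: "Q \<in> pieces m A f N" "infinite Q" for Q
  proof -
    obtain a where "a \<in> Q"
      using Q(2) by (metis finite.emptyI ex_in_conv)
    then obtain y where y: "y \<in> Y" "a \<in> nbhd (n y) y"
      using \<F> Y pieces_subset_topspace[OF Q(1)] X_eq by auto
    have "n y \<le> N"
      unfolding N_def using y(1) Y(2) by (simp add: member_le_sum)
    then obtain Q' where Q': "Q' \<in> pieces m A f (n y)" "Q \<subseteq> Q'"
      using infinite_piece_refines[OF Q(1) _ Q(2)] by blast
    then have "Q \<subseteq> mcball y \<epsilon>"
      using n[OF _ Q'(1)] piece_meeting_nbhd[OF y(2) Q'(1)] \<open>a \<in> Q\<close> y(1) Y(1) by blast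
    then show ?thesis
      using y(1) Y(1) by blast
  qed
  then show ?thesis
    using that by blast
qed

lemma pieces_uniformly_small:
  assumes "0 < \<epsilon>"
  obtains N where "\<And>Q a b. Q \<in> pieces m A f N \<Longrightarrow> a \<in> Q \<Longrightarrow> b \<in> Q \<Longrightarrow> d a b < \<epsilon>"
proof -
  obtain N where N: "\<And>Q. Q \<in> pieces m A f N \<Longrightarrow> infinite Q \<Longrightarrow> \<exists>y\<in>M. Q \<subseteq> mcball y (\<epsilon> / 3)"
    using infinite_pieces_in_small_balls[of "\<epsilon> / 3"] assms by auto
  have "d a b < \<epsilon>" if Q: "Q \<in> pieces m A f N" and "a \<in> Q" "b \<in> Q" for Q a b
  proof (cases "a = b")
    case True
    then show ?thesis
      using assms pieces_subset_topspace[OF Q] \<open>a \<in> Q\<close> X_eq by auto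
  next
    case False
    then have "infinite Q"
      using connectedin_finite_imp_eq[OF Hausdorff_imp_t1_space[OF Hausdorff_X] connectedin_pieces[OF Q]]
        \<open>a \<in> Q\<close> \<open>b \<in> Q\<close> by blast
    then obtain y where "y \<in> M" "Q \<subseteq> mcball y (\<epsilon> / 3)"
      using N[OF Q] by blast
    then have "d y a \<le> \<epsilon> / 3" "d y b \<le> \<epsilon> / 3" "a \<in> M" "b \<in> M"
      using \<open>a \<in> Q\<close> \<open>b \<in> Q\<close> by auto
    then show ?thesis
      using triangle''[of a y b] \<open>y \<in> M\<close> assms by simp
  qed
  then show ?thesis
    using that by blast
qed

end


section \<open>Approximate conjugacies\<close>

definition comb_conjugacy ::
  "'a topology \<Rightarrow> nat \<Rightarrow> (nat \<Rightarrow> 'a set) \<Rightarrow> (nat \<Rightarrow> 'a \<Rightarrow> 'a)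
     \<Rightarrow> (nat \<Rightarrow> 'a set) \<Rightarrow> (nat \<Rightarrow> 'a \<Rightarrow> 'a) \<Rightarrow> ('a \<Rightarrow> 'a) \<Rightarrow> bool" where
  "comb_conjugacy X m A f B g H \<longleftrightarrow>
     homeomorphic_map X X H \<and>
     (\<forall>i<m. H ` A i = B i) \<and>
     (\<forall>i<m. \<forall>x \<in> A i \<inter> bk m A. H (f i x) = g i (H x)) \<and>
     (\<forall>i<m. \<forall>j<m. A j \<subseteq> f i ` A i \<longleftrightarrow> B j \<subseteq> g i ` B i)"

lemma comb_conjugate_iff: "comb_conjugate X m A f B g \<longleftrightarrow> (\<exists>H. comb_conjugacy X m A f B g H)"
  unfolding comb_conjugate_def comb_conjugacy_def ..

lemma comb_conjugacy_inverse:
  assumes F: "markov_map X m A f" and H: "comb_conjugacy X m A f B g H"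
    and HK: "homeomorphic_maps X X H K"
  shows "comb_conjugacy X m B g A f K"
proof -
  interpret F: markov_system X m A f
    by (rule markov_system.intro[OF F])
  have H_A: "H ` A i = B i" and H_bk: "\<And>x. x \<in> A i \<inter> bk m A \<Longrightarrow> H (f i x) = g i (H x)"
    if "i < m" for i
    using H that unfolding comb_conjugacy_def by blast+
  have K_H: "K (H x) = x" if "x \<in> topspace X" for x
    using HK that unfolding homeomorphic_maps_def by blast
  have K_B: "K ` B i = A i" if "i < m" for i
    using H_A[OF that] K_H F.A_subset_topspace[OF that] by force
  have inj_H: "inj_on H (\<Union>i<m. A i)"
    using homeomorphic_imp_injective_map[OF homeomorphic_maps_imp_map[OF HK]] F.Union_A by simp
  have bk_H: "B i \<inter> bk m B = H ` (A i \<inter> bk m A)" if "i < m" for i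
    using image_Int_bk[OF inj_H H_A that] by simp
  have "K (g i y) = f i (K y)" if i: "i < m" and y: "y \<in> B i \<inter> bk m B" for i y
  proof -
    obtain x where x: "x \<in> A i \<inter> bk m A" "y = H x"
      using bk_H[OF i] y by blast
    have "x \<in> topspace X" "f i x \<in> topspace X"
      using x(1) F.A_subset_topspace[OF i] F.image_f_subset_topspace[OF i] by auto
    then show ?thesis
      using H_bk[OF i x(1)] K_H x(2) by metis
  qed
  moreover have "homeomorphic_map X X K"
    using HK homeomorphic_maps_map by blast
  ultimately show ?thesis
    using H K_B unfolding comb_conjugacy_def by blast
qed

locale markov_conjugacy = F: markov_system X m A f + G: expanding_markov_system X m B g M d
  for X :: "'a topology" and m A f B g M d +
  fixes H0 :: "'a \<Rightarrow> 'a"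
  assumes comb: "comb_conjugacy X m A f B g H0"
begin

lemma H0_A: "i < m \<Longrightarrow> H0 ` A i = B i"
  and H0_bk: "i < m \<Longrightarrow> x \<in> A i \<Longrightarrow> x \<in> bk m A \<Longrightarrow> H0 (f i x) = g i (H0 x)"
  and matrix: "i < m \<Longrightarrow> j < m \<Longrightarrow> A j \<subseteq> f i ` A i \<longleftrightarrow> B j \<subseteq> g i ` B i"
  using comb unfolding comb_conjugacy_def by blast+

lemma homeomorphic_map_H0: "homeomorphic_map X X H0"
  using comb unfolding comb_conjugacy_def by blast

lemma image_image_f:
  assumes h: "\<And>j. j < m \<Longrightarrow> h ` A j = B j" and "i < m"
  shows "h ` f i ` A i = g i ` B i"
proof
  show "h ` f i ` A i \<subseteq> g i ` B i"
  proof
    fix z assume "z \<in> h ` f i ` A i"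
    then obtain y where "y \<in> f i ` A i" "z = h y"
      by blast
    moreover obtain j where "j < m" "A j \<subseteq> f i ` A i" "y \<in> A j"
      using F.obtain_covered_A[OF \<open>i < m\<close> calculation(1)] by blast
    ultimately show "z \<in> g i ` B i"
      using h[of j] matrix[OF \<open>i < m\<close>, of j] by blast
  qed
  show "g i ` B i \<subseteq> h ` f i ` A i"
  proof
    fix z assume "z \<in> g i ` B i"
    then obtain j where "j < m" "B j \<subseteq> g i ` B i" "z \<in> B j"
      using G.obtain_covered_A[OF \<open>i < m\<close>] by blast
    then have "A j \<subseteq> f i ` A i" "z \<in> h ` A j"
      using matrix[OF \<open>i < m\<close>] h by auto
    then show "z \<in> h ` f i ` A i"
      by blast
  qed
qed

primrec approx :: "nat \<Rightarrow> 'a \<Rightarrow> 'a" where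
  "approx 0 = H0"
| "approx (Suc n) = (\<lambda>x. G.finv (LEAST i. i < m \<and> x \<in> A i) (approx n (f (LEAST i. i < m \<and> x \<in> A i) x)))"

declare approx.simps(2) [simp del]

definition admissible :: "('a \<Rightarrow> 'a) \<Rightarrow> bool" where
  "admissible h \<longleftrightarrow> continuous_map X X h \<and> inj_on h (topspace X) \<and>
     (\<forall>j<m. h ` A j = B j) \<and> (\<forall>x \<in> bk m A. h x = H0 x)"

lemma admissible_H0: "admissible H0"
  using homeomorphic_map_H0 H0_A unfolding admissible_def
  by (simp add: homeomorphic_imp_continuous_map homeomorphic_imp_injective_map)

lemma image_image_f_admissible: "admissible h \<Longrightarrow> i < m \<Longrightarrow> h ` f i ` A i = g i ` B i"
  using image_image_f unfolding admissible_def by blast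

lemma branch_at_bk:
  assumes adm: "admissible h" and "k < m" "x \<in> A k" "x \<in> bk m A"
  shows "G.finv k (h (f k x)) = H0 x"
proof -
  have "h (f k x) = g k (H0 x)"
    using adm F.f_bk H0_bk assms(2-4) unfolding admissible_def by metis
  moreover have "H0 x \<in> B k"
    using H0_A assms(2,3) by blast
  ultimately show ?thesis
    using G.finv_f assms(2) by simp
qed

(* The choice of index by LEAST is immaterial: indices can only compete at break points, where
   every branch gives H0. *)
lemma approx_Suc_eq:
  assumes adm: "admissible (approx n)" and "i < m" "x \<in> A i"
  shows "approx (Suc n) x = G.finv i (approx n (f i x))"
proof -
  define j where "j = (LEAST i. i < m \<and> x \<in> A i)"
  have j: "j < m" "x \<in> A j"
    using LeastI[of "\<lambda>i. i < m \<and> x \<in> A i" i] assms(2,3) unfolding j_def by blast+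
  show ?thesis
  proof (cases "j = i")
    case False
    then have "x \<in> bk m A"
      unfolding bk_def using assms(2,3) j by blast
    then show ?thesis
      using branch_at_bk[OF adm] assms(2,3) j by (simp add: approx.simps(2) j_def[symmetric])
  qed (simp add: approx.simps(2) j_def)
qed

lemma approx_Suc_mem_B:
  assumes adm: "admissible (approx n)" and "i < m" "x \<in> A i"
  shows "approx (Suc n) x \<in> B i" and "g i (approx (Suc n) x) = approx n (f i x)"
proof -
  have "approx n (f i x) \<in> g i ` B i"
    using image_image_f_admissible[OF adm assms(2)] assms(3) by blast
  then show "approx (Suc n) x \<in> B i" "g i (approx (Suc n) x) = approx n (f i x)"
    using approx_Suc_eq[OF assms] G.f_finv G.finv_in_A by simp_all
qed

lemma image_approx_Suc_A:
  assumes adm: "admissible (approx n)" and "i < m"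
  shows "approx (Suc n) ` A i = B i"
proof -
  have "approx (Suc n) ` A i = G.finv i ` approx n ` f i ` A i"
    using approx_Suc_eq[OF adm assms(2)] by (force simp: image_iff)
  also have "\<dots> = G.finv i ` g i ` B i"
    using image_image_f_admissible[OF adm assms(2)] by simp
  also have "\<dots> = B i"
    using G.finv_f[OF assms(2)] by force
  finally show ?thesis .
qed

lemma approx_Suc_bk:
  assumes adm: "admissible (approx n)" and "x \<in> bk m A"
  shows "approx (Suc n) x = H0 x"
proof -
  obtain k where "k < m" "x \<in> A k"
    using assms(2) unfolding bk_def by blast
  then show ?thesis
    using approx_Suc_eq[OF adm] branch_at_bk[OF adm] assms(2) by simp
qed

lemma inj_on_approx_Suc_A:
  assumes adm: "admissible (approx n)" and "i < m"
  shows "inj_on (approx (Suc n)) (A i)"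
proof
  fix x y assume xy: "x \<in> A i" "y \<in> A i" "approx (Suc n) x = approx (Suc n) y"
  then have "approx n (f i x) = approx n (f i y)"
    using approx_Suc_mem_B(2)[OF adm assms(2)] by metis
  moreover have "f i x \<in> topspace X" "f i y \<in> topspace X"
    using F.image_f_subset_topspace[OF assms(2)] xy by auto
  ultimately have "f i x = f i y"
    using adm unfolding admissible_def by (meson inj_onD)
  then show "x = y"
    using F.inj_on_f[OF assms(2)] xy by (meson inj_onD)
qed

(* Two points of different A i with the same image are break points, where the map is H0. *)
lemma inj_on_approx_Suc:
  assumes adm: "admissible (approx n)"
  shows "inj_on (approx (Suc n)) (topspace X)"
proof
  fix x y assume x: "x \<in> topspace X" and y: "y \<in> topspace X"
    and eq: "approx (Suc n) x = approx (Suc n) y"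
  obtain i j where ij: "i < m" "x \<in> A i" "j < m" "y \<in> A j"
    using F.obtain_A x y by metis
  show "x = y"
  proof (cases "i = j")
    case False
    have inj_H0: "inj_on H0 (\<Union>i<m. A i)"
      using homeomorphic_imp_injective_map[OF homeomorphic_map_H0] F.Union_A by simp
    have bk: "z \<in> bk m A"
      if k: "k < m" "z \<in> A k" and l: "approx (Suc n) z \<in> B l" "l < m" "l \<noteq> k" for z k l
    proof -
      have "approx (Suc n) z \<in> B k \<inter> bk m B"
        using approx_Suc_mem_B(1)[OF adm k] k l unfolding bk_def by blast
      then have "approx (Suc n) z \<in> H0 ` (A k \<inter> bk m A)"
        using image_Int_bk[OF inj_H0 H0_A k(1)] by simp
      then obtain z' where z': "z' \<in> A k" "z' \<in> bk m A" "approx (Suc n) z' = approx (Suc n) z"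
        using approx_Suc_bk[OF adm] by auto
      then have "z' = z"
        using inj_onD[OF inj_on_approx_Suc_A[OF adm k(1)]] k(2) by blast
      then show ?thesis
        using z'(2) by simp
    qed
    have "approx (Suc n) x \<in> B j" "approx (Suc n) y \<in> B i"
      using approx_Suc_mem_B(1)[OF adm ij(1,2)] approx_Suc_mem_B(1)[OF adm ij(3,4)] eq by simp_all
    then have "x \<in> bk m A" "y \<in> bk m A"
      using bk ij False by auto
    then have "H0 x = H0 y"
      using approx_Suc_bk[OF adm] eq by simp
    then show ?thesis
      using inj_onD[OF inj_H0] ij by blast
  qed (use inj_on_approx_Suc_A[OF adm] ij eq in \<open>meson inj_onD\<close>)
qed

lemma continuous_map_approx_Suc:
  assumes adm: "admissible (approx n)"
  shows "continuous_map X X (approx (Suc n))"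
proof (rule pasting_lemma_closed)
  show "continuous_map (subtopology X (A i)) X (G.finv i \<circ> approx n \<circ> f i)" if "i \<in> {..<m}" for i
  proof -
    have "approx n ` f i ` A i = g i ` B i"
      using image_image_f_admissible[OF adm] that by simp
    then have "approx n ` topspace (subtopology X (f i ` A i)) \<subseteq> g i ` B i"
      by (metis image_mono inf_le2 topspace_subtopology)
    moreover have "continuous_map (subtopology X (f i ` A i)) X (approx n)"
      using adm continuous_map_from_subtopology unfolding admissible_def by blast
    ultimately have "continuous_map (subtopology X (f i ` A i)) (subtopology X (g i ` B i)) (approx n)"
      by (simp add: continuous_map_in_subtopology image_subset_iff_funcset)
    then show ?thesis
      using F.homeomorphic_map_f G.continuous_map_finv that
      by (meson continuous_map_compose homeomorphic_imp_continuous_map lessThan_iff)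
  qed
  show "(G.finv i \<circ> approx n \<circ> f i) x = (G.finv j \<circ> approx n \<circ> f j) x"
    if "i \<in> {..<m}" "j \<in> {..<m}" "x \<in> topspace X \<inter> A i \<inter> A j" for i j x
    using approx_Suc_eq[OF adm] that by (metis IntE comp_apply lessThan_iff)
  show "\<exists>j. j \<in> {..<m} \<and> x \<in> A j \<and> approx (Suc n) x = (G.finv j \<circ> approx n \<circ> f j) x"
    if "x \<in> topspace X" for x
    using F.obtain_A[OF that] approx_Suc_eq[OF adm] by (metis comp_apply lessThan_iff)
qed (use F.closedin_A in auto)

lemma admissible_approx: "admissible (approx n)"
proof (induction n)
  case (Suc n)
  then show ?case
    using continuous_map_approx_Suc[OF Suc] inj_on_approx_Suc[OF Suc] image_approx_Suc_A[OF Suc]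
      approx_Suc_bk[OF Suc]
    unfolding admissible_def by blast
qed (simp add: admissible_H0)


lemma approx_in_topspace: "x \<in> topspace X \<Longrightarrow> approx n x \<in> topspace X"
  using admissible_approx unfolding admissible_def
  by (meson continuous_map_image_subset_topspace image_subset_iff)

end

section \<open>The limit conjugacy\<close>

context markov_conjugacy
begin

lemma image_approx_Suc_preimage:
  assumes "i < m" "P \<subseteq> f i ` A i"
  shows "approx (Suc n) ` {x \<in> A i. f i x \<in> P} = {y \<in> B i. g i y \<in> approx n ` P}"
proof
  show "approx (Suc n) ` {x \<in> A i. f i x \<in> P} \<subseteq> {y \<in> B i. g i y \<in> approx n ` P}"
    using approx_Suc_mem_B[OF admissible_approx assms(1)] by auto
  show "{y \<in> B i. g i y \<in> approx n ` P} \<subseteq> approx (Suc n) ` {x \<in> A i. f i x \<in> P}"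
  proof
    fix y assume "y \<in> {y \<in> B i. g i y \<in> approx n ` P}"
    then obtain x where y: "y \<in> B i" "x \<in> A i" "f i x \<in> P" "g i y = approx n (f i x)"
      using assms(2) by auto
    then have "g i (approx (Suc n) x) = g i y" "approx (Suc n) x \<in> B i"
      using approx_Suc_mem_B[OF admissible_approx assms(1)] by auto
    then have "approx (Suc n) x = y"
      using inj_onD[OF G.inj_on_f[OF assms(1)]] y(1) by blast
    then show "y \<in> approx (Suc n) ` {x \<in> A i. f i x \<in> P}"
      using y(2,3) by blast
  qed
qed

lemma approx_image_pieces:
  "k \<le> n \<Longrightarrow> P \<in> pieces m A f k \<Longrightarrow>
     approx n ` P \<in> pieces m B g k \<and> approx (Suc n) ` P = approx n ` P"
proof (induction k arbitrary: n P)
  case 0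
  then obtain j where "j < m" "P = A j"
    by auto
  moreover have "approx n ` A j = B j" "approx (Suc n) ` A j = B j"
    using admissible_approx \<open>j < m\<close> unfolding admissible_def by blast+
  ultimately show ?case
    by simp
next
  case (Suc k)
  obtain i P' where P: "P = {x \<in> A i. f i x \<in> P'}" "i < m" "P' \<in> pieces m A f k" "P' \<subseteq> f i ` A i"
    using Suc.prems(2) by auto
  obtain n' where n': "n = Suc n'" "k \<le> n'"
    using Suc.prems(1) by (metis Suc_le_D Suc_le_mono)
  have IH: "approx n' ` P' \<in> pieces m B g k" "approx (Suc n') ` P' = approx n' ` P'"
    using Suc.IH[OF n'(2) P(3)] by auto
  have "approx n' ` P' \<subseteq> approx n' ` f i ` A i"
    using P(4) by (rule image_mono)
  then have "approx n' ` P' \<subseteq> g i ` B i"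
    by (simp only: image_image_f_admissible[OF admissible_approx P(2)])
  then have "{y \<in> B i. g i y \<in> approx n' ` P'} \<in> pieces m B g (Suc k)"
    unfolding pieces.simps using IH(1) P(2) by blast
  moreover have "approx n ` P = {y \<in> B i. g i y \<in> approx n' ` P'}"
    using image_approx_Suc_preimage[OF P(2,4)] n'(1) P(1) by simp
  moreover have "approx (Suc n) ` P = {y \<in> B i. g i y \<in> approx n' ` P'}"
    using image_approx_Suc_preimage[OF P(2,4), of n] n'(1) P(1) IH(2) by simp
  ultimately show ?case
    by simp
qed

lemma approx_image_piece_stable:
  assumes "P \<in> pieces m A f k" "k \<le> n" "n \<le> n'"
  shows "approx n' ` P = approx n ` P"
  using assms(3)
proof (induction n' rule: dec_induct)
  case (step n')
  then show ?case
    using approx_image_pieces[OF _ assms(1), of n'] assms(2) by simp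
qed simp

lemma approx_uniformly_Cauchy:
  assumes "0 < \<epsilon>"
  shows "\<exists>N. \<forall>n n' x. N \<le> n \<longrightarrow> N \<le> n' \<longrightarrow> x \<in> topspace X \<longrightarrow> d (approx n x) (approx n' x) < \<epsilon>"
proof -
  obtain N where N: "\<And>Q a b. Q \<in> pieces m B g N \<Longrightarrow> a \<in> Q \<Longrightarrow> b \<in> Q \<Longrightarrow> d a b < \<epsilon>"
    using G.pieces_uniformly_small[OF assms] by blast
  have "d (approx n x) (approx n' x) < \<epsilon>"
    if n: "N \<le> n" "N \<le> n'" and x: "x \<in> topspace X" for n n' x
  proof -
    obtain P where P: "P \<in> pieces m A f N" "x \<in> P"
      using F.obtain_piece_topspace[OF x] by blast
    have "approx n x \<in> approx N ` P" "approx n' x \<in> approx N ` P"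
      using approx_image_piece_stable[OF P(1) order_refl] n P(2) by blast+
    then show ?thesis
      using N approx_image_pieces[OF order_refl P(1)] by blast
  qed
  then show ?thesis
    by blast
qed

definition uniform_limit_approx :: "('a \<Rightarrow> 'a) \<Rightarrow> bool" where
  "uniform_limit_approx H \<longleftrightarrow> continuous_map X X H \<and>
     (\<forall>\<epsilon>>0. \<forall>\<^sub>F n in sequentially. \<forall>x\<in>topspace X. d (approx n x) (H x) < \<epsilon>)"

lemma obtain_uniform_limit_approx:
  obtains H where "uniform_limit_approx H"
proof -
  have complete: "G.mcomplete"
    using G.compact_space_imp_mcomplete G.compact G.X_eq by simp
  have "\<forall>\<^sub>F n in sequentially. continuous_map X G.mtopology (approx n)"
    using admissible_approx G.X_eq unfolding admissible_def by simp
  then obtain H where "continuous_map X G.mtopology H"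
    "\<And>\<epsilon>. 0 < \<epsilon> \<Longrightarrow> \<forall>\<^sub>F n in sequentially. \<forall>x\<in>topspace X. d (approx n x) (H x) < \<epsilon>"
    using G.continuous_map_uniformly_Cauchy_limit[OF complete _ approx_uniformly_Cauchy] by blast
  then show ?thesis
    using that G.X_eq unfolding uniform_limit_approx_def by auto
qed

lemma uniform_limit_approx_in_topspace:
  "uniform_limit_approx H \<Longrightarrow> x \<in> topspace X \<Longrightarrow> H x \<in> topspace X"
  unfolding uniform_limit_approx_def by (meson continuous_map_image_subset_topspace image_subset_iff)

lemma limitin_approx:
  assumes H: "uniform_limit_approx H" and x: "x \<in> topspace X"
  shows "limitin X (\<lambda>n. approx n x) (H x) sequentially"
proof -
  have "\<forall>\<^sub>F n in sequentially. d (approx n x) (H x) < \<epsilon>" if "0 < \<epsilon>" for \<epsilon>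
    using H x that unfolding uniform_limit_approx_def by (fast elim: eventually_mono)
  then show ?thesis
    using approx_in_topspace[OF x] uniform_limit_approx_in_topspace[OF H x]
    unfolding G.X_eq G.limitin_metric by (simp add: eventually_conj_iff)
qed

lemma limitin_uniform_limit_approx_diagonal:
  assumes H: "uniform_limit_approx H" and y: "\<And>n. y n \<in> topspace X"
    and lim: "limitin X (\<lambda>n. approx n (y n)) z sequentially"
  shows "limitin X (\<lambda>n. H (y n)) z sequentially"
proof -
  have z: "z \<in> M"
    using lim unfolding G.X_eq G.limitin_metric by blast
  have in_M: "approx n (y n) \<in> M" "H (y n) \<in> M" for n
    using approx_in_topspace[OF y] uniform_limit_approx_in_topspace[OF H y] G.X_eq by auto
  have "\<forall>\<^sub>F n in sequentially. d (H (y n)) z < \<epsilon>" if "0 < \<epsilon>" for \<epsilon>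
  proof -
    have e2: "0 < \<epsilon> / 2"
      using that by simp
    have "\<forall>\<^sub>F n in sequentially. approx n (y n) \<in> M \<and> d (approx n (y n)) z < \<epsilon> / 2"
      using lim e2 unfolding G.X_eq G.limitin_metric by blast
    then have "\<forall>\<^sub>F n in sequentially. d (approx n (y n)) z < \<epsilon> / 2"
      by (simp add: eventually_conj_iff)
    moreover have "\<forall>\<^sub>F n in sequentially. \<forall>x\<in>topspace X. d (approx n x) (H x) < \<epsilon> / 2"
      using H e2 unfolding uniform_limit_approx_def by blast
    then have "\<forall>\<^sub>F n in sequentially. d (approx n (y n)) (H (y n)) < \<epsilon> / 2"
      by (rule eventually_mono) (use y in blast)
    ultimately show ?thesis
    proof eventually_elim
      case (elim n)
      then show ?case
        using G.triangle[OF in_M(2)[of n] in_M(1)[of n] z] G.commute[of "H (y n)" "approx n (y n)"]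
        by linarith
    qed
  qed
  then show ?thesis
    using z in_M unfolding G.X_eq G.limitin_metric by simp
qed

lemma uniform_limit_approx_conj:
  assumes H: "uniform_limit_approx H" and i: "i < m" and x: "x \<in> A i"
  shows "H (f i x) = g i (H x)"
proof -
  have L: "limitin X (\<lambda>n. approx (Suc n) x) (H x) sequentially"
    using limitin_sequentially_offset[OF limitin_approx[OF H], of x 1] x F.A_subset_topspace[OF i] by auto
  have in_B: "\<forall>\<^sub>F n in sequentially. approx (Suc n) x \<in> B i"
    using approx_Suc_mem_B(1)[OF admissible_approx i x] by simp
  then have "H x \<in> B i"
    using limitin_closedin[OF L G.closedin_A[OF i]] by simp
  then have "limitin (subtopology X (B i)) (\<lambda>n. approx (Suc n) x) (H x) sequentially"
    using L in_B by (simp add: limitin_subtopology)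
  then have lim_g: "limitin X (\<lambda>n. g i (approx (Suc n) x)) (g i (H x)) sequentially"
    using continuous_map_limit[OF G.continuous_map_f[OF i]] by (simp add: o_def)
  have "f i x \<in> topspace X"
    using F.image_f_subset_topspace[OF i] x by blast
  then have lim_f: "limitin X (\<lambda>n. g i (approx (Suc n) x)) (H (f i x)) sequentially"
    using limitin_approx[OF H] by (simp add: approx_Suc_mem_B(2)[OF admissible_approx i x])
  show ?thesis
    using limitin_Hausdorff_unique[OF lim_f lim_g _ G.Hausdorff_X] by simp
qed

end

locale markov_conjugacy_pair =
  AB: markov_conjugacy X m A f B g M d H0 + BA: markov_conjugacy X m B g A f M d K0
  for X :: "'a topology" and m A f B g M d H0 K0 +
  assumes K0_H0: "\<And>x. x \<in> topspace X \<Longrightarrow> K0 (H0 x) = x"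
begin

lemma approx_inverse: "x \<in> topspace X \<Longrightarrow> BA.approx n (AB.approx n x) = x"
proof (induction n arbitrary: x)
  case 0
  then show ?case
    by (simp add: K0_H0)
next
  case (Suc n)
  obtain i where i: "i < m" "x \<in> A i"
    using AB.F.obtain_A[OF Suc.prems] by blast
  have y: "AB.approx (Suc n) x \<in> B i" "g i (AB.approx (Suc n) x) = AB.approx n (f i x)"
    using AB.approx_Suc_mem_B[OF AB.admissible_approx i] by auto
  have "f i x \<in> topspace X"
    using AB.F.image_f_subset_topspace[OF i(1)] i(2) by blast
  then have "BA.approx (Suc n) (AB.approx (Suc n) x) = AB.F.finv i (f i x)"
    using BA.approx_Suc_eq[OF BA.admissible_approx i(1) y(1)] y(2) Suc.IH by simp
  then show ?case
    using AB.F.finv_f[OF i] by simp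
qed

lemma uniform_limits_inverse:
  assumes H: "AB.uniform_limit_approx H" and K: "BA.uniform_limit_approx K"
    and x: "x \<in> topspace X"
  shows "K (H x) = x"
proof -
  have "continuous_map X X K"
    using K unfolding BA.uniform_limit_approx_def by blast
  then have "limitin X (\<lambda>n. K (AB.approx n x)) (K (H x)) sequentially"
    using continuous_map_limit AB.limitin_approx[OF H x] by (fastforce simp: o_def)
  moreover have "limitin X (\<lambda>n. K (AB.approx n x)) x sequentially"
    using BA.limitin_uniform_limit_approx_diagonal[OF K AB.approx_in_topspace[OF x]]
      approx_inverse[OF x] x by simp
  ultimately show ?thesis
    using limitin_Hausdorff_unique AB.G.Hausdorff_X by fastforce
qed

end

lemma markov_conjugacy_pairI:
  assumes "Metric_space M d" "X = Metric_space.mtopology M d" "compact_space X"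
    and "markov_map X m A f" "markov_map X m B g" "top_expanding X m A f" "top_expanding X m B g"
    and "comb_conjugacy X m A f B g H0" "comb_conjugacy X m B g A f K0"
    and "homeomorphic_maps X X H0 K0"
  shows "markov_conjugacy_pair X m A f B g M d H0 K0"
proof -
  have "expanding_markov_system X m A f M d" "expanding_markov_system X m B g M d"
    using assms(1-7)
    by (simp_all add: expanding_markov_system_def expanding_markov_system_axioms_def markov_system_def)
  then show ?thesis
    using assms(8-10)
    by (simp add: markov_conjugacy_pair_def markov_conjugacy_pair_axioms_def markov_conjugacy_def
        markov_conjugacy_axioms_def expanding_markov_system_def homeomorphic_maps_def)
qed

theorem proposition2p6:
  fixes X :: "'a topology" and m :: nat
    and A B :: "nat \<Rightarrow> 'a set" and f g :: "nat \<Rightarrow> 'a \<Rightarrow> 'a"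
  assumes "compact_space X" and "metrizable_space X"
    and "markov_map X m A f" and "markov_map X m B g"
    and "top_expanding X m A f" and "top_expanding X m B g"
    and "comb_conjugate X m A f B g"
  shows "\<exists>H. homeomorphic_map X X H \<and> (\<forall>i<m. \<forall>x \<in> A i. H (f i x) = g i (H x))"
proof -
  obtain M d where Md: "Metric_space M d" "X = Metric_space.mtopology M d"
    using assms(2) unfolding metrizable_space_def by blast
  obtain H0 where H0: "comb_conjugacy X m A f B g H0"
    using assms(7) comb_conjugate_iff by blast
  then have "homeomorphic_map X X H0"
    unfolding comb_conjugacy_def by (rule conjunct1)
  then obtain K0 where H0_K0: "homeomorphic_maps X X H0 K0"
    using homeomorphic_map_maps by blast
  have K0: "comb_conjugacy X m B g A f K0"
    using comb_conjugacy_inverse[OF assms(3) H0 H0_K0] .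
  interpret P: markov_conjugacy_pair X m A f B g M d H0 K0
    using markov_conjugacy_pairI[OF Md assms(1,3-6) H0 K0 H0_K0] .
  interpret Q: markov_conjugacy_pair X m B g A f M d K0 H0
    using markov_conjugacy_pairI[OF Md assms(1,4,3,6,5) K0 H0]
      homeomorphic_maps_sym[THEN iffD1, OF H0_K0] by blast
  obtain H K where H: "P.AB.uniform_limit_approx H" and K: "P.BA.uniform_limit_approx K"
    using P.AB.obtain_uniform_limit_approx P.BA.obtain_uniform_limit_approx by metis
  have "homeomorphic_maps X X H K"
    unfolding homeomorphic_maps_def
    using H K P.uniform_limits_inverse[OF H K] Q.uniform_limits_inverse[OF K H]
    unfolding P.AB.uniform_limit_approx_def P.BA.uniform_limit_approx_def by simp
  then show ?thesis
    using homeomorphic_maps_imp_map P.AB.uniform_limit_approx_conj[OF H] by blast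
qed

end
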